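(* Fix an integer $m\ge1$ and define numbers $r_n$ by $\sum_{n\ge0} r_n x^n=\dfrac{1}{1-x-x^m}$. Then for every $n\ge m+1$, $$r_{n-m-1}=\sum_{(a_1,\dots,a_k)\in C(n)}\Bigl\lfloor\frac{a_1-1}{m}\Bigr\rfloor\cdots\Bigl\lfloor\frac{a_k-1}{m}\Bigr\rfloor,$$ where the only nonzero terms come from compositions in which every part is at least $m+1$.
   Context: $C(n)$ denotes the set of all compositions $(a_1,\dots,a_k)$ of $n$ (finite sequences of positive integers with sum $n$), with any number $k$ of parts. *)

theory Defs
  imports Complex_Main "HOL-Computational_Algebra.Formal_Power_Series"
begin

definition compositions :: "nat \<Rightarrow> nat list set" where
  "compositions n = {as. (\<forall>a\<in>set as. 0 < a) \<and> sum_list as = n}"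

definition rseq :: "nat \<Rightarrow> nat \<Rightarrow> rat" where
  "rseq m n = fps_nth (inverse (1 - fps_X - fps_X ^ m)) n"

end

theory Submission
  imports Defs
begin

text \<open>Splitting off the first part gives the recursion \<open>S(n) = \<Sum> w(a) S(n - a)\<close>
  (over \<open>1 \<le> a \<le> n\<close>) for weighted composition sums, so their generating function is
  \<open>1 / (1 - W)\<close> with \<open>W = \<Sum> w(a) x\<^sup>a\<close> (over \<open>a \<ge> 1\<close>). For the weight \<open>w(a) = \<lfloor>(a - 1)/m\<rfloor>\<close>
  one has \<open>W = x\<^bsup>m+1\<^esup> / ((1 - x)(1 - x\<^sup>m))\<close>, and since
  \<open>(1 - x)(1 - x\<^sup>m) - x\<^bsup>m+1\<^esup> = 1 - x - x\<^sup>m\<close>, this gives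
  \<open>1 / (1 - W) = 1 + x\<^bsup>m+1\<^esup> / (1 - x - x\<^sup>m)\<close>. Now compare coefficients of \<open>x\<^sup>n\<close>.\<close>

lemma length_le_sum_list_pos:
  "\<forall>a\<in>set as. 0 < a \<Longrightarrow> length as \<le> sum_list (as :: nat list)"
  by (induction as) auto

lemma finite_compositions: "finite (compositions n)"
proof -
  have "compositions n \<subseteq> {as. set as \<subseteq> {0..n} \<and> length as \<le> n}"
    using length_le_sum_list_pos member_le_sum_list
    unfolding compositions_def by fastforce
  then show ?thesis
    using finite_lists_length_le[of "{0..n}" n] finite_subset by blast
qed

lemma compositions_0: "compositions 0 = {[]}"
proof -
  have "as = []" if "as \<in> compositions 0" for as
    using that unfolding compositions_def by (cases as) auto
  then show ?thesis
    unfolding compositions_def by auto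
qed

lemma compositions_eq_UN_Cons:
  assumes "0 < n"
  shows "compositions n = (\<Union>a\<in>{1..n}. (#) a ` compositions (n - a))"
proof (intro set_eqI iffI)
  fix as assume as: "as \<in> compositions n"
  with assms obtain a bs where as_eq: "as = a # bs"
    unfolding compositions_def by (cases as) auto
  with as have "a \<in> {1..n}" and "bs \<in> compositions (n - a)"
    unfolding compositions_def by auto
  then show "as \<in> (\<Union>a\<in>{1..n}. (#) a ` compositions (n - a))"
    unfolding as_eq by blast
qed (auto simp: compositions_def)

definition composition_sum :: "(nat \<Rightarrow> 'a::comm_ring_1) \<Rightarrow> nat \<Rightarrow> 'a" where
  "composition_sum w n = (\<Sum>as\<in>compositions n. \<Prod>a\<leftarrow>as. w a)"

lemma composition_sum_0 [simp]: "composition_sum w 0 = 1"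
  by (simp add: composition_sum_def compositions_0)

lemma composition_sum_rec:
  assumes "0 < n"
  shows "composition_sum w n = (\<Sum>a=1..n. w a * composition_sum w (n - a))"
proof -
  have "composition_sum w n = (\<Sum>a=1..n. \<Sum>as\<in>(#) a ` compositions (n - a). \<Prod>b\<leftarrow>as. w b)"
    unfolding composition_sum_def compositions_eq_UN_Cons[OF assms]
    by (rule sum.UNION_disjoint) (auto simp: finite_compositions)
  also have "\<dots> = (\<Sum>a=1..n. \<Sum>as\<in>compositions (n - a). \<Prod>b\<leftarrow>a # as. w b)"
  proof (rule sum.cong [OF refl])
    fix a
    show "(\<Sum>as\<in>(#) a ` compositions (n - a). \<Prod>b\<leftarrow>as. w b)
          = (\<Sum>as\<in>compositions (n - a). \<Prod>b\<leftarrow>a # as. w b)"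
      by (subst sum.reindex) (auto simp: inj_on_def)
  qed
  finally show ?thesis
    by (simp add: composition_sum_def sum_distrib_left)
qed

lemma composition_sum_of_int:
  "of_int (composition_sum w n) = composition_sum (\<lambda>a. of_int (w a)) n"
proof -
  have "of_int (\<Prod>a\<leftarrow>as. w a) = (\<Prod>a\<leftarrow>as. of_int (w a) :: 'a)" for as
    by (induction as) simp_all
  then show ?thesis
    by (simp add: composition_sum_def)
qed

lemma fps_composition_sum:
  fixes w :: "nat \<Rightarrow> 'a::field"
  shows "Abs_fps (composition_sum w) = inverse (1 - Abs_fps (\<lambda>a. if a = 0 then 0 else w a))"
proof -
  define S where "S = Abs_fps (composition_sum w)"
  define W where "W = Abs_fps (\<lambda>a. if a = 0 then 0 else w a)"
  have "S = 1 + W * S"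
  proof (rule fps_ext)
    fix n
    show "fps_nth S n = fps_nth (1 + W * S) n"
    proof (cases "n = 0")
      case False
      have "fps_nth (W * S) n = (\<Sum>a=1..n. fps_nth W a * fps_nth S (n - a))"
        by (simp add: fps_mult_nth sum.atLeast_Suc_atMost W_def)
      with False show ?thesis
        by (simp add: S_def W_def composition_sum_rec)
    qed (simp add: S_def W_def)
  qed
  then have "(1 - W) * S = 1"
    by (metis add_diff_cancel_right' left_diff_distrib mult_1)
  then show ?thesis
    unfolding S_def W_def by (rule fps_inverse_unique [symmetric])
qed

lemma floor_pred_divide_of_nat:
  "1 \<le> a \<Longrightarrow> \<lfloor>(of_nat a - 1) / (of_nat m :: 'a::floor_ceiling)\<rfloor> = int ((a - 1) div m)"
  by (metis floor_divide_of_nat_eq of_nat_1 of_nat_diff)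

lemma floor_pred_divide_of_nat_eq_0:
  "1 \<le> a \<Longrightarrow> a \<le> m \<Longrightarrow> \<lfloor>(of_nat a - 1) / (of_nat m :: 'a::floor_ceiling)\<rfloor> = 0"
  by (simp add: floor_pred_divide_of_nat)

lemma pred_div_diff_eq:
  fixes m n :: nat
  assumes "1 \<le> m"
  shows "(n - 1) div m - (n - m - 1) div m = (if m < n then 1 else 0)"
proof (cases "m < n")
  case True
  then have "n - 1 = (n - m - 1) + m" by simp
  then have "(n - 1) div m = (n - m - 1) div m + 1"
    using assms by (simp only: div_add_self2)
  with True show ?thesis by simp
next
  case False
  with assms have "n - 1 < m" by simp
  with False show ?thesis by simp
qed

lemma fps_pred_div_times_one_minus_X_power:
  assumes "1 \<le> m"
  shows "(1 - fps_X ^ m) * Abs_fps (\<lambda>n. of_nat ((n - 1) div m) :: 'a::comm_ring_1)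
         = Abs_fps (\<lambda>n. if m < n then 1 else 0)"
proof (rule fps_ext)
  fix n
  have "fps_nth ((1 - fps_X ^ m) * Abs_fps (\<lambda>n. of_nat ((n - 1) div m) :: 'a)) n
        = of_nat ((n - 1) div m) - of_nat ((n - m - 1) div m)"
    by (simp add: left_diff_distrib fps_X_power_mult_nth)
  also have "\<dots> = of_nat ((n - 1) div m - (n - m - 1) div m)"
    by (simp add: of_nat_diff div_le_mono)
  also have "\<dots> = fps_nth (Abs_fps (\<lambda>n. if m < n then 1 else 0)) n"
    unfolding pred_div_diff_eq[OF assms] by simp
  finally show "fps_nth ((1 - fps_X ^ m) * Abs_fps (\<lambda>n. of_nat ((n - 1) div m) :: 'a)) n
             = fps_nth (Abs_fps (\<lambda>n. if m < n then 1 else 0)) n" .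
qed

lemma fps_one_minus_X_times_tail:
  "(1 - fps_X) * Abs_fps (\<lambda>n. if k < n then 1 else 0) = (fps_X ^ Suc k :: 'a::comm_ring_1 fps)"
  by (rule fps_ext) (auto simp: left_diff_distrib fps_X_power_nth)

lemma fps_inverse_one_minus_pred_div:
  fixes m :: nat
  assumes m: "1 \<le> m"
  defines "W \<equiv> Abs_fps (\<lambda>n. of_nat ((n - 1) div m) :: 'a::field)"
  shows "inverse (1 - W) = 1 + fps_X ^ Suc m * inverse (1 - fps_X - fps_X ^ m)"
proof -
  define P :: "'a fps" where "P = 1 - fps_X - fps_X ^ m"
  define Q :: "'a fps" where "Q = (1 - fps_X) * (1 - fps_X ^ m)"
  have "W * Q = (1 - fps_X) * ((1 - fps_X ^ m) * W)"
    by (simp only: Q_def mult_ac)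
  also have "\<dots> = fps_X ^ Suc m"
    unfolding W_def fps_pred_div_times_one_minus_X_power[OF m] by (rule fps_one_minus_X_times_tail)
  finally have "W * Q = fps_X ^ Suc m" .
  moreover have Q: "Q = P + fps_X ^ Suc m"
    unfolding Q_def P_def by (simp add: algebra_simps)
  ultimately have "(1 - W) * Q = P"
    by (simp add: left_diff_distrib)
  then have "Q * inverse P = inverse (1 - W) * (Q * inverse Q)"
    by (metis fps_inverse_mult mult.commute mult.left_commute)
  moreover have "Q * inverse Q = 1"
    using m by (intro inverse_mult_eq_1') (simp add: Q_def)
  ultimately have "inverse (1 - W) = Q * inverse P"
    by simp
  also have "\<dots> = 1 + fps_X ^ Suc m * inverse P"
    using m by (simp add: Q P_def distrib_right inverse_mult_eq_1')
  finally show ?thesis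
    unfolding P_def .
qed

lemma composition_sum_pred_div:
  assumes "1 \<le> m" and "m < n"
  shows "composition_sum (\<lambda>a. of_nat ((a - 1) div m)) n = rseq m (n - m - 1)"
proof -
  let ?w = "\<lambda>a. of_nat ((a - 1) div m) :: rat"
  \<comment> \<open>\<open>?w 0 = 0\<close> because of truncated subtraction, so no case split at \<open>0\<close> is needed\<close>
  have "Abs_fps (\<lambda>a. if a = 0 then 0 else ?w a) = Abs_fps ?w"
    by (rule fps_ext) simp
  then have "Abs_fps (composition_sum ?w) = inverse (1 - Abs_fps ?w)"
    by (simp only: fps_composition_sum)
  also have "\<dots> = 1 + fps_X ^ Suc m * inverse (1 - fps_X - fps_X ^ m)"
    by (rule fps_inverse_one_minus_pred_div[OF assms(1)])
  finally have "Abs_fps (composition_sum ?w) = 1 + fps_X ^ Suc m * inverse (1 - fps_X - fps_X ^ m)" .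
  then have "composition_sum ?w n = fps_nth (1 + fps_X ^ Suc m * inverse (1 - fps_X - fps_X ^ m)) n"
    by (metis fps_nth_Abs_fps)
  with assms(2) show ?thesis
    unfolding rseq_def fps_add_nth fps_X_power_mult_nth by simp
qed

theorem proposition7:
  fixes m n :: nat
  assumes "m \<ge> 1" and "n \<ge> m + 1"
  shows "rseq m (n - m - 1) =
           of_int (\<Sum>as\<in>compositions n.
                     \<Prod>a\<leftarrow>as. \<lfloor>(of_nat a - 1) / (of_nat m :: rat)\<rfloor>)
         \<and> (\<forall>as\<in>compositions n.
              (\<Prod>a\<leftarrow>as. \<lfloor>(of_nat a - 1) / (of_nat m :: rat)\<rfloor>) \<noteq> 0
              \<longrightarrow> (\<forall>a\<in>set as. a \<ge> m + 1))"
proof -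
  have floor_eq: "\<lfloor>(of_nat a - 1) / (of_nat m :: rat)\<rfloor> = int ((a - 1) div m)"
    if "as \<in> compositions n" "a \<in> set as" for as a
  proof -
    from that have "1 \<le> a"
      unfolding compositions_def by auto
    then show ?thesis
      by (rule floor_pred_divide_of_nat)
  qed
  have "(\<Sum>as\<in>compositions n. \<Prod>a\<leftarrow>as. \<lfloor>(of_nat a - 1) / (of_nat m :: rat)\<rfloor>)
        = composition_sum (\<lambda>a. int ((a - 1) div m)) n"
    unfolding composition_sum_def using floor_eq by (intro sum.cong refl arg_cong[of _ _ prod_list]) simp
  moreover have "of_int (composition_sum (\<lambda>a. int ((a - 1) div m)) n) = rseq m (n - m - 1)"
    using composition_sum_pred_div[of m n] assms by (simp add: composition_sum_of_int)
  moreover have "a \<ge> m + 1"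
    if "as \<in> compositions n" "(\<Prod>a\<leftarrow>as. \<lfloor>(of_nat a - 1) / (of_nat m :: rat)\<rfloor>) \<noteq> 0"
      and "a \<in> set as" for as a
  proof (rule ccontr)
    assume "\<not> a \<ge> m + 1"
    moreover have "1 \<le> a"
      using that unfolding compositions_def by auto
    ultimately have "\<lfloor>(of_nat a - 1) / (of_nat m :: rat)\<rfloor> = 0"
      by (simp add: floor_pred_divide_of_nat_eq_0)
    with that show False
      by (auto simp: prod_list_zero_iff)
  qed
  ultimately show ?thesis
    by auto
qed

end
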